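(* Let $Q=\{(x,y)\in\mathbb R^2: x,y>0\}$, identified with the interior $\{[x:y:1]:x,y>0\}$ of a triangle in ${\mathbb RP}^2$, with its Hilbert metric $d_Q(b,c)=|\log cr(a,b,c,d)|$. Then the Hilbert area form on $Q$ is $$\omega_Q=\frac{dx\,dy}{xy}.$$
   Context: Hilbert metric on a properly convex open set $\Omega$: for $b,c\in\Omega$ let the projective line through them meet $\partial\Omega$ at $a,d$ with $a,b,c,d$ in order; $d_\Omega(b,c)=|\log cr(a,b,c,d)|$ with $cr(y_1,y_2,y_3,y_4)=\frac{(y_1-y_3)(y_2-y_4)}{(y_1-y_2)(y_3-y_4)}$ (here without the factor $1/2$). This is a Finsler metric. The p-area of a 2-dimensional normed space $(V,\|\cdot\|)$ is $K^{-1}\lambda$ where $\lambda$ is Lebesgue measure from an inner product and $K$ is the supremum of $\lambda$-areas of parallelograms spanned by two vectors of norm $\le1$. The Hilbert area form is the p-area of the Hilbert Finsler norm on each tangent space. *)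

theory Defs
  imports "HOL-Analysis.Analysis"
begin

text \<open>Points of the affine chart R^2 = {[x:y:1]} of RP^2 are pairs of reals.\<close>

definition quadrant :: "(real \<times> real) set" where
  "quadrant = {(x, y). x > 0 \<and> y > 0}"

text \<open>Affine parametrisation of the projective line through b and c (parameter 0 is b,
  parameter 1 is c, and parameter +-infinity is the point of the line at infinity).\<close>

definition line_pt :: "real \<times> real \<Rightarrow> real \<times> real \<Rightarrow> real \<Rightarrow> real \<times> real" where
  "line_pt b c t = b + t *\<^sub>R (c - b)"

text \<open>Parameters of the boundary points a (on the side of b) and d (on the side of c)
  of the convex open set Omega on the line through b and c; the value +-infinity means the
  boundary point is the point at infinity of the line.\<close>

definition bd_param_a :: "(real \<times> real) set \<Rightarrow> real \<times> real \<Rightarrow> real \<times> real \<Rightarrow> ereal" where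
  "bd_param_a \<Omega> b c = Inf {ereal t | t. line_pt b c t \<in> \<Omega>}"

definition bd_param_d :: "(real \<times> real) set \<Rightarrow> real \<times> real \<Rightarrow> real \<times> real \<Rightarrow> ereal" where
  "bd_param_d \<Omega> b c = Sup {ereal t | t. line_pt b c t \<in> \<Omega>}"

definition cross_ratio :: "real \<Rightarrow> real \<Rightarrow> real \<Rightarrow> real \<Rightarrow> real" where
  "cross_ratio y1 y2 y3 y4 = ((y1 - y3) * (y2 - y4)) / ((y1 - y2) * (y3 - y4))"

text \<open>cr(a,b,c,d) with b = 0, c = 1 in the line parameter; it factors as
  ((a-1)/a) * (d/(d-1)), and a factor whose point is the point at infinity of the line
  is replaced by its limit value 1 (projective invariance / continuity of the cross ratio).\<close>

definition hilbert_cr :: "(real \<times> real) set \<Rightarrow> real \<times> real \<Rightarrow> real \<times> real \<Rightarrow> real" where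
  "hilbert_cr \<Omega> b c =
     (let ta = bd_param_a \<Omega> b c; td = bd_param_d \<Omega> b c;
          fa = (if ta = -\<infinity> then 1 else (real_of_ereal ta - 1) / real_of_ereal ta);
          fd = (if td = \<infinity> then 1 else real_of_ereal td / (real_of_ereal td - 1))
      in fa * fd)"


definition hilbert_dist :: "(real \<times> real) set \<Rightarrow> real \<times> real \<Rightarrow> real \<times> real \<Rightarrow> real" where
  "hilbert_dist \<Omega> b c = \<bar>ln (hilbert_cr \<Omega> b c)\<bar>"

definition hilbert_norm :: "(real \<times> real) set \<Rightarrow> real \<times> real \<Rightarrow> real \<times> real \<Rightarrow> real" where
  "hilbert_norm \<Omega> p v = Lim (at_right 0) (\<lambda>t. hilbert_dist \<Omega> p (p + t *\<^sub>R v) / t)"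

definition p_area_K :: "(real \<times> real \<Rightarrow> real) \<Rightarrow> real" where
  "p_area_K N = Sup {\<bar>fst u * snd v - snd u * fst v\<bar> | u v. N u \<le> 1 \<and> N v \<le> 1}"

definition p_area :: "(real \<times> real \<Rightarrow> real) \<Rightarrow> (real \<times> real) measure" where
  "p_area N = scale_measure (ennreal (1 / p_area_K N)) lborel"

end

theory Submission
  imports Defs
begin

text \<open>In homogeneous coordinates the quadrant is the open triangle {[x:y:z] : x, y, z > 0}, and the
  line from p to c leaves it exactly where one of the three affine functions
  t \<mapsto> p_i + t (c_i - p_i) vanishes. This makes the cross ratio equal to
  max_i (c_i/p_i) / min_i (c_i/p_i), the third ratio being 1. Differentiating at p gives the Finsler
  norm max(0,a,b) - min(0,a,b) with a = v_1/x, b = v_2/y, whose unit ball is the hexagon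
  |a|, |b|, |a - b| \<le> 1. Parallelograms inscribed in that hexagon have area at most 1, attained
  by the vectors (x, 0) and (0, y), so K = xy.\<close>

lemma Inf_ereal_interval:
  fixes a b :: ereal
  assumes "a < b"
  shows "Inf (ereal ` {t. a < ereal t \<and> ereal t < b}) = a"
proof (rule antisym)
  show "Inf (ereal ` {t. a < ereal t \<and> ereal t < b}) \<le> a"
    unfolding Inf_le_iff
  proof (intro allI impI)
    fix y assume "a < y"
    with assms obtain t where "a < ereal t" "ereal t < min y b"
      using ereal_dense2 by (metis min_less_iff_conj)
    then show "\<exists>z\<in>ereal ` {t. a < ereal t \<and> ereal t < b}. z < y" by auto
  qed
qed (auto intro: Inf_greatest)

lemma Sup_ereal_interval:
  fixes a b :: ereal
  assumes "a < b"
  shows "Sup (ereal ` {t. a < ereal t \<and> ereal t < b}) = b"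
proof (rule antisym)
  show "b \<le> Sup (ereal ` {t. a < ereal t \<and> ereal t < b})"
    unfolding le_Sup_iff
  proof (intro allI impI)
    fix y assume "y < b"
    with assms obtain t where "max y a < ereal t" "ereal t < b"
      using ereal_dense2 by (metis max_less_iff_conj)
    then show "\<exists>z\<in>ereal ` {t. a < ereal t \<and> ereal t < b}. y < z" by auto
  qed
qed (auto intro: Sup_least)

lemma one_plus_mult_pos_iff_ereal:
  fixes t c :: real
  assumes "c \<ge> 0"
  shows "1 + t * c > 0 \<longleftrightarrow> - inverse (ereal c) < ereal t"
    and "1 - t * c > 0 \<longleftrightarrow> ereal t < inverse (ereal c)"
  using assms by (auto simp: field_simps)

lemma line_pt_in_quadrant_iff:
  assumes "p \<in> quadrant"
  shows "line_pt p c t \<in> quadrant \<longleftrightarrow>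
    1 + t * (fst c / fst p - 1) > 0 \<and> 1 + t * (snd c / snd p - 1) > 0"
proof -
  have "fst p > 0" "snd p > 0" using assms by (auto simp: quadrant_def)
  then have "fst p + t * (fst c - fst p) = fst p * (1 + t * (fst c / fst p - 1))"
    "snd p + t * (snd c - snd p) = snd p * (1 + t * (snd c / snd p - 1))"
    by (simp_all add: field_simps)
  with \<open>fst p > 0\<close> \<open>snd p > 0\<close> show ?thesis
    by (cases p, cases c) (simp add: line_pt_def quadrant_def zero_less_mult_iff)
qed

lemma affine_pos_between:
  fixes t m a M :: real
  assumes "m \<le> a" "a \<le> M" "1 + t * m > 0" "1 + t * M > 0"
  shows "1 + t * a > 0"
proof (cases "t \<ge> 0")
  case True
  then show ?thesis using assms mult_left_mono[of m a t] by linarith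
next
  case False
  then show ?thesis using assms mult_left_mono_neg[of a M t] by linarith
qed

lemma affine_pos_iff_extremes:
  fixes t r1 r2 :: real
  shows "1 + t * (r1 - 1) > 0 \<and> 1 + t * (r2 - 1) > 0 \<longleftrightarrow>
    1 + t * (max 1 (max r1 r2) - 1) > 0 \<and> 1 - t * (1 - min 1 (min r1 r2)) > 0"
    (is "?lhs \<longleftrightarrow> ?rhs")
proof
  assume ?lhs
  then have pos: "1 + t * (a - 1) > 0" if "a \<in> {1, r1, r2}" for a
    using that by auto
  have "1 + t * (max 1 (max r1 r2) - 1) > 0" "1 + t * (min 1 (min r1 r2) - 1) > 0"
    by (rule pos, auto simp: max_def min_def)+
  then show ?rhs by (simp add: algebra_simps)
next
  assume ?rhs
  then have "1 + t * (a - 1) > 0" if "min 1 (min r1 r2) \<le> a" "a \<le> max 1 (max r1 r2)" for a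
    using affine_pos_between[of "min 1 (min r1 r2) - 1" "a - 1" "max 1 (max r1 r2) - 1" t] that
    by (simp add: algebra_simps)
  then show ?lhs by simp
qed

lemma ereal_neg_inverse_less_inverse:
  fixes \<alpha> \<beta> :: real
  assumes "\<alpha> \<ge> 0" "\<beta> \<ge> 0"
  shows "- inverse (ereal \<alpha>) < inverse (ereal \<beta>)"
  using assms inverse_positive_iff_positive[of \<alpha>] inverse_positive_iff_positive[of \<beta>]
  by (auto simp: le_less intro: less_trans[of _ 0])

text \<open>Since inverse (ereal 0) = \<infinity>, a boundary parameter is infinite exactly when the line meets
  the boundary at infinity on that side.\<close>

lemma quadrant_line_params:
  fixes p c :: "real \<times> real"
  assumes p: "p \<in> quadrant"
  defines "R \<equiv> max 1 (max (fst c / fst p) (snd c / snd p))"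
    and "r \<equiv> min 1 (min (fst c / fst p) (snd c / snd p))"
  shows "{t. line_pt p c t \<in> quadrant} =
    {t. - inverse (ereal (R - 1)) < ereal t \<and> ereal t < inverse (ereal (1 - r))}"
proof (rule Collect_cong)
  fix t
  have "R - 1 \<ge> 0" "1 - r \<ge> 0" by (auto simp: R_def r_def)
  have "line_pt p c t \<in> quadrant \<longleftrightarrow> 1 + t * (R - 1) > 0 \<and> 1 - t * (1 - r) > 0"
    unfolding line_pt_in_quadrant_iff[OF p] affine_pos_iff_extremes R_def r_def ..
  also have "\<dots> \<longleftrightarrow> - inverse (ereal (R - 1)) < ereal t \<and> ereal t < inverse (ereal (1 - r))"
    using one_plus_mult_pos_iff_ereal \<open>R - 1 \<ge> 0\<close> \<open>1 - r \<ge> 0\<close> by blast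
  finally show "line_pt p c t \<in> quadrant \<longleftrightarrow> \<dots>" .
qed

lemma hilbert_cr_quadrant:
  assumes "p \<in> quadrant"
  shows "hilbert_cr quadrant p c =
    max 1 (max (fst c / fst p) (snd c / snd p)) / min 1 (min (fst c / fst p) (snd c / snd p))"
proof -
  define R where "R = max 1 (max (fst c / fst p) (snd c / snd p))"
  define r where "r = min 1 (min (fst c / fst p) (snd c / snd p))"
  have R: "R - 1 \<ge> 0" and r: "1 - r \<ge> 0" by (auto simp: R_def r_def)
  let ?a = "- inverse (ereal (R - 1))" and ?d = "inverse (ereal (1 - r))"
  have "?a < ?d"
    using R r by (rule ereal_neg_inverse_less_inverse)
  note interval = Inf_ereal_interval[OF this] Sup_ereal_interval[OF this]
  have "{ereal t | t. line_pt p c t \<in> quadrant} = ereal ` {t. ?a < ereal t \<and> ereal t < ?d}"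
    using quadrant_line_params[OF assms, where c = c, folded R_def r_def] by blast
  then have a: "bd_param_a quadrant p c = ?a" and d: "bd_param_d quadrant p c = ?d"
    unfolding bd_param_a_def bd_param_d_def by (simp_all only: interval)
  have fa: "(if ?a = -\<infinity> then 1 else (real_of_ereal ?a - 1) / real_of_ereal ?a) = R"
  proof (cases "R = 1")
    case False
    with R have "R - 1 > 0" by simp
    then have "(- inverse (R - 1) - 1) / (- inverse (R - 1)) = 1 + (R - 1)"
      by (simp add: field_simps)
    then show ?thesis by simp
  qed simp
  have fd: "(if ?d = \<infinity> then 1 else real_of_ereal ?d / (real_of_ereal ?d - 1)) = 1 / r"
  proof (cases "r = 1")
    case False
    with r have "1 - r > 0" by simp
    then have "inverse (1 - r) / (inverse (1 - r) - 1) = 1 / (1 - (1 - r))"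
      by (cases "r = 0") (simp_all add: field_simps)
    then show ?thesis by simp
  qed simp
  have "hilbert_cr quadrant p c = R * (1 / r)"
    unfolding hilbert_cr_def Let_def a d fa fd ..
  then show ?thesis by (simp add: R_def r_def)
qed

lemma hilbert_dist_quadrant:
  assumes p: "p \<in> quadrant" and c: "c \<in> quadrant"
  shows "hilbert_dist quadrant p c =
    ln (max 1 (max (fst c / fst p) (snd c / snd p))) -
    ln (min 1 (min (fst c / fst p) (snd c / snd p)))"
proof -
  define R where "R = max 1 (max (fst c / fst p) (snd c / snd p))"
  define r where "r = min 1 (min (fst c / fst p) (snd c / snd p))"
  have "r > 0" using p c by (auto simp: r_def quadrant_def mem_Times_iff)
  moreover have "r \<le> R" by (simp add: R_def r_def)
  ultimately have "ln (R / r) \<ge> 0" by simp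
  with \<open>r > 0\<close> \<open>r \<le> R\<close> show ?thesis
    unfolding hilbert_dist_def hilbert_cr_quadrant[OF p] R_def[symmetric] r_def[symmetric]
    by (simp add: ln_div)
qed

text \<open>Maximum minus minimum of the relative rates v_1/x, v_2/y, 0 of the three homogeneous
  coordinates x, y, 1.\<close>

definition simplex_norm :: "real \<times> real \<Rightarrow> real" where
  "simplex_norm w = max 0 (max (fst w) (snd w)) - min 0 (min (fst w) (snd w))"

lemma hilbert_dist_quadrant_ray:
  fixes p v :: "real \<times> real" and s :: real
  defines "a \<equiv> fst v / fst p" and "b \<equiv> snd v / snd p"
  assumes p: "p \<in> quadrant" and s: "s \<ge> 0" and inside: "1 + s * min 0 (min a b) > 0"
  shows "hilbert_dist quadrant p (p + s *\<^sub>R v) =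
    ln (1 + s * max 0 (max a b)) - ln (1 + s * min 0 (min a b))"
proof -
  have "fst p > 0" "snd p > 0" using p by (auto simp: quadrant_def)
  then have coords: "fst (p + s *\<^sub>R v) = fst p * (1 + s * a)"
      "snd (p + s *\<^sub>R v) = snd p * (1 + s * b)"
    by (simp_all add: a_def b_def field_simps)
  then have ratios: "fst (p + s *\<^sub>R v) / fst p = 1 + s * a"
      "snd (p + s *\<^sub>R v) / snd p = 1 + s * b"
    using \<open>fst p > 0\<close> \<open>snd p > 0\<close> by simp_all
  have "s * min 0 (min a b) \<le> s * a" "s * min 0 (min a b) \<le> s * b"
    using s by (auto intro!: mult_left_mono)
  with inside have "1 + s * a > 0" "1 + s * b > 0" by linarith+
  with \<open>fst p > 0\<close> \<open>snd p > 0\<close> have "fst (p + s *\<^sub>R v) > 0" "snd (p + s *\<^sub>R v) > 0"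
    unfolding coords by simp_all
  then have c: "p + s *\<^sub>R v \<in> quadrant"
    by (simp add: quadrant_def mem_Times_iff)
  have "max 1 (max (1 + s * a) (1 + s * b)) = 1 + s * max 0 (max a b)"
    "min 1 (min (1 + s * a) (1 + s * b)) = 1 + s * min 0 (min a b)"
    using s by (simp_all add: max_add_distrib_right max_mult_distrib_left
        min_add_distrib_right min_mult_distrib_left)
  then show ?thesis
    unfolding hilbert_dist_quadrant[OF p c] ratios by simp
qed

lemma hilbert_norm_quadrant:
  assumes p: "p \<in> quadrant"
  shows "hilbert_norm quadrant p v = simplex_norm (fst v / fst p, snd v / snd p)"
proof -
  define M where "M = max 0 (max (fst v / fst p) (snd v / snd p))"
  define m where "m = min 0 (min (fst v / fst p) (snd v / snd p))"
  define f where "f s = ln (1 + s * M) - ln (1 + s * m)" for s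
  have "(f has_field_derivative (M - m)) (at 0 within {0<..})"
    unfolding f_def by (auto intro!: derivative_eq_intros)
  then have lim: "((\<lambda>s. (f s - f 0) / (s - 0)) \<longlongrightarrow> M - m) (at_right 0)"
    using has_field_derivative_iff by blast
  have "((\<lambda>s. 1 + s * m) \<longlongrightarrow> 1) (at_right 0)"
    by (auto intro!: tendsto_eq_intros)
  then have "eventually (\<lambda>s. 1 + s * m > 0) (at_right 0)"
    by (rule order_tendstoD(1)) simp
  moreover have "eventually (\<lambda>s. s > 0) (at_right (0::real))"
    by (simp add: eventually_at_right_less)
  ultimately have "eventually (\<lambda>s. (f s - f 0) / (s - 0) =
      hilbert_dist quadrant p (p + s *\<^sub>R v) / s) (at_right 0)"
    by eventually_elim
      (simp add: hilbert_dist_quadrant_ray[OF p] f_def M_def m_def)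
  then have "((\<lambda>s. hilbert_dist quadrant p (p + s *\<^sub>R v) / s) \<longlongrightarrow> M - m) (at_right 0)"
    using lim by (rule tendsto_cong[THEN iffD1])
  then have "hilbert_norm quadrant p v = M - m"
    unfolding hilbert_norm_def by (rule tendsto_Lim[rotated]) simp
  then show ?thesis
    by (simp add: simplex_norm_def M_def m_def)
qed

text \<open>Each of the six cases is a triangle spanned by 0 and two adjacent vertices of the hexagon;
  there b is a combination of those vertices with nonnegative weights of sum at most 1, and the
  determinant, linear in b, is at most 1 at every vertex.\<close>

lemma hexagon_det_le_1:
  fixes a1 a2 b1 b2 :: real
  assumes "\<bar>a1\<bar> \<le> 1" "\<bar>a2\<bar> \<le> 1" "\<bar>a1 - a2\<bar> \<le> 1"
    and "\<bar>b1\<bar> \<le> 1" "\<bar>b2\<bar> \<le> 1" "\<bar>b1 - b2\<bar> \<le> 1"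
  shows "a1 * b2 - a2 * b1 \<le> 1"
proof -
  have conv: "a1 * b2 - a2 * b1 \<le> 1"
    if "a1 * b2 - a2 * b1 = l * u + k * w" "l \<ge> 0" "k \<ge> 0" "l + k \<le> 1" "u \<le> 1" "w \<le> 1"
    for l k u w :: real
  proof -
    have "l * u \<le> l" "k * w \<le> k"
      using that mult_left_mono[of u 1 l] mult_left_mono[of w 1 k] by simp_all
    then show ?thesis using that by linarith
  qed
  consider "b1 \<ge> b2" "b2 \<ge> 0" | "b2 \<ge> b1" "b1 \<ge> 0" | "b2 \<ge> 0" "0 \<ge> b1"
    | "0 \<ge> b2" "b2 \<ge> b1" | "0 \<ge> b1" "b1 \<ge> b2" | "b1 \<ge> 0" "0 \<ge> b2"
    by linarith
  then show ?thesis
  proof cases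
    case 1
    show ?thesis
      by (rule conv[of "b1 - b2" "-a2" b2 "a1 - a2"]) (use 1 assms in \<open>auto simp: algebra_simps\<close>)
  next
    case 2
    show ?thesis
      by (rule conv[of b1 "a1 - a2" "b2 - b1" a1]) (use 2 assms in \<open>auto simp: algebra_simps\<close>)
  next
    case 3
    show ?thesis
      by (rule conv[of b2 a1 "-b1" a2]) (use 3 assms in \<open>auto simp: algebra_simps\<close>)
  next
    case 4
    show ?thesis
      by (rule conv[of "b2 - b1" a2 "-b2" "a2 - a1"]) (use 4 assms in \<open>auto simp: algebra_simps\<close>)
  next
    case 5
    show ?thesis
      by (rule conv[of "-b1" "a2 - a1" "b1 - b2" "-a1"]) (use 5 assms in \<open>auto simp: algebra_simps\<close>)
  next
    case 6
    show ?thesis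
      by (rule conv[of "-b2" "-a1" b1 "-a2"]) (use 6 assms in \<open>auto simp: algebra_simps\<close>)
  qed
qed

lemma simplex_norm_le_1_imp_hexagon:
  assumes "simplex_norm w \<le> 1"
  shows "\<bar>fst w\<bar> \<le> 1" "\<bar>snd w\<bar> \<le> 1" "\<bar>fst w - snd w\<bar> \<le> 1"
  using assms unfolding simplex_norm_def by linarith+

lemma abs_det_le_1_simplex_norm:
  assumes "simplex_norm u \<le> 1" "simplex_norm v \<le> 1"
  shows "\<bar>fst u * snd v - snd u * fst v\<bar> \<le> 1"
  using hexagon_det_le_1[of "fst u" "snd u" "fst v" "snd v"]
    hexagon_det_le_1[of "fst v" "snd v" "fst u" "snd u"]
    simplex_norm_le_1_imp_hexagon[OF assms(1)] simplex_norm_le_1_imp_hexagon[OF assms(2)]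
  by (simp add: abs_le_iff algebra_simps)

lemma p_area_K_simplex_norm_scaled:
  fixes x y :: real
  assumes x: "x > 0" and y: "y > 0"
  shows "p_area_K (\<lambda>v. simplex_norm (fst v / x, snd v / y)) = x * y"
  unfolding p_area_K_def
proof (rule cSup_eq_maximum)
  have "simplex_norm (fst (x, 0) / x, snd (x, 0) / y) = 1"
    "simplex_norm (fst (0, y) / x, snd (0, y) / y) = 1"
    using x y by (simp_all add: simplex_norm_def)
  moreover have "\<bar>fst (x, 0) * snd (0, y) - snd (x, 0) * fst (0, y)\<bar> = x * y"
    using x y by simp
  ultimately show "x * y \<in> {\<bar>fst u * snd v - snd u * fst v\<bar> | u v.
      simplex_norm (fst u / x, snd u / y) \<le> 1 \<and> simplex_norm (fst v / x, snd v / y) \<le> 1}"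
    by (metis (mono_tags, lifting) mem_Collect_eq order_refl)
next
  fix z assume "z \<in> {\<bar>fst u * snd v - snd u * fst v\<bar> | u v.
      simplex_norm (fst u / x, snd u / y) \<le> 1 \<and> simplex_norm (fst v / x, snd v / y) \<le> 1}"
  then obtain u v where z: "z = \<bar>fst u * snd v - snd u * fst v\<bar>"
    and u: "simplex_norm (fst u / x, snd u / y) \<le> 1"
    and v: "simplex_norm (fst v / x, snd v / y) \<le> 1"
    by blast
  have "fst u * snd v - snd u * fst v =
      x * y * ((fst u / x) * (snd v / y) - (snd u / y) * (fst v / x))"
    using x y by (simp add: field_simps)
  then have "z = x * y * \<bar>(fst u / x) * (snd v / y) - (snd u / y) * (fst v / x)\<bar>"
    using x y z by (simp add: abs_mult)
  also have "\<dots> \<le> x * y"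
    using abs_det_le_1_simplex_norm[OF u v] x y by (simp add: mult_left_le)
  finally show "z \<le> x * y" .
qed

theorem lemma2p4:
  fixes x y :: real
  assumes "(x, y) \<in> quadrant"
  shows "p_area (hilbert_norm quadrant (x, y)) = scale_measure (ennreal (1 / (x * y))) lborel"
proof -
  have "x > 0" "y > 0" using assms by (auto simp: quadrant_def)
  have "hilbert_norm quadrant (x, y) = (\<lambda>v. simplex_norm (fst v / x, snd v / y))"
    using hilbert_norm_quadrant[OF assms] by auto
  then show ?thesis
    unfolding p_area_def using p_area_K_simplex_norm_scaled[OF \<open>x > 0\<close> \<open>y > 0\<close>] by simp
qed

end
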